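(* Let $\alpha$ be a unit-speed curve in $\mathbb{R}^3$ with nonvanishing curvature, let $\alpha_T$ be its tangent indicatrix, and let $\beta$ be a Bertrand-direction curve of $\alpha_T$ (an $X$-direction curve of $\alpha_T$ with $N_\beta=N_T$). Then: (i) $\alpha_T$ is a spherical helix if and only if $\beta$ is a helix; (ii) $\alpha_T$ is a spherical slant helix if and only if $\beta$ is a slant helix.
   Context: Let $\alpha:I\subset\mathbb{R}\to\mathbb{R}^3$ be a unit-speed curve with curvature $\kappa>0$, torsion $\tau$ and Frenet frame $\{T,N,B\}$. The tangent indicatrix of $\alpha$ is the curve $\alpha_T=T$ on the unit sphere. Its arc length is $s_T=\int\kappa\,ds$. Its Frenet apparatus is $\{T_T,N_T,B_T,\kappa_T,\tau_T\}$, with $\frac{dT_T}{ds_T}=\kappa_TN_T$, $\frac{dN_T}{ds_T}=-\kappa_TT_T+\tau_TB_T$ and $\frac{dB_T}{ds_T}=-\tau_TN_T$. Let $x,y,z$ be real functions of $s_T$ with $x^2+y^2+z^2=1$, and set $X=xT_T+yN_T+zB_T$. An integral curve $\beta$ of $X$, meaning $d\beta/ds_T=X$, is an $X$-direction curve of $\alpha_T$. It is regarded as a unit-speed Frenet curve with frame $\{T_\beta=X,N_\beta,B_\beta\}$, curvature $\kappa_\beta>0$ and torsion $\tau_\beta$. $\beta$ is a Bertrand-direction curve of $\alpha_T$ if $N_\beta=N_T$. A curve with curvature $k>0$ and torsion $t$ is a helix if its unit tangent makes a constant angle with a fixed line; equivalently, $t/k$ is constant. It is a slant helix if its principal normal makes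 a constant angle with a fixed line; equivalently, $\frac{k^2}{(k^2+t^2)^{3/2}}(t/k)'$ is constant, where $'$ is the derivative with respect to arc length. A spherical helix (respectively, spherical slant helix) is a helix (respectively, slant helix) lying on a sphere. *)

theory Defs
  imports "HOL-Analysis.Analysis"
begin

definition frenet_curve ::
  "real set \<Rightarrow> (real \<Rightarrow> real^3) \<Rightarrow> (real \<Rightarrow> real^3) \<Rightarrow> (real \<Rightarrow> real^3) \<Rightarrow> (real \<Rightarrow> real^3)
   \<Rightarrow> (real \<Rightarrow> real) \<Rightarrow> (real \<Rightarrow> real) \<Rightarrow> bool" where
  "frenet_curve J c T N B k t \<longleftrightarrow>
     (\<forall>s\<in>J.
        (c has_vector_derivative T s) (at s) \<and>
        (T has_vector_derivative (k s *\<^sub>R N s)) (at s) \<and>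
        (N has_vector_derivative (- (k s *\<^sub>R T s) + t s *\<^sub>R B s)) (at s) \<and>
        (B has_vector_derivative (- (t s *\<^sub>R N s))) (at s) \<and>
        norm (T s) = 1 \<and> norm (N s) = 1 \<and> T s \<bullet> N s = 0 \<and>
        B s = cross3 (T s) (N s) \<and> k s > 0)"

definition vec_angle :: "real^3 \<Rightarrow> real^3 \<Rightarrow> real" where
  "vec_angle v w = arccos ((v \<bullet> w) / (norm v * norm w))"

definition unit_tangent :: "(real \<Rightarrow> real^3) \<Rightarrow> real \<Rightarrow> real^3" where
  "unit_tangent c s = (1 / norm (vector_derivative c (at s))) *\<^sub>R vector_derivative c (at s)"

definition principal_normal :: "(real \<Rightarrow> real^3) \<Rightarrow> real \<Rightarrow> real^3" where
  "principal_normal c s =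
     (1 / norm (vector_derivative (unit_tangent c) (at s))) *\<^sub>R vector_derivative (unit_tangent c) (at s)"

definition helix :: "real set \<Rightarrow> (real \<Rightarrow> real^3) \<Rightarrow> bool" where
  "helix J c \<longleftrightarrow> (\<exists>u. u \<noteq> 0 \<and> (\<exists>\<theta>. \<forall>s\<in>J. vec_angle (unit_tangent c s) u = \<theta>))"

definition slant_helix :: "real set \<Rightarrow> (real \<Rightarrow> real^3) \<Rightarrow> bool" where
  "slant_helix J c \<longleftrightarrow> (\<exists>u. u \<noteq> 0 \<and> (\<exists>\<theta>. \<forall>s\<in>J. vec_angle (principal_normal c s) u = \<theta>))"

definition spherical :: "real set \<Rightarrow> (real \<Rightarrow> real^3) \<Rightarrow> bool" where
  "spherical J c \<longleftrightarrow> (\<exists>m r. r > 0 \<and> (\<forall>s\<in>J. dist (c s) m = r))"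

end

theory Submission
  imports Defs "HOL-Homology.Invariance_of_Domain"
begin

text \<open>For a unit-speed Frenet curve with frame T, N, B and curvature k > 0 we have
  (T \<bullet> u)' = k (N \<bullet> u); so on an interval the tangent makes a constant angle with u
  exactly when N is orthogonal to u. Since N\<beta> = NT, both the helix condition and the
  slant helix condition for \<beta> coincide with those for the tangent indicatrix, whatever
  the direction components x, y, z are; and the tangent indicatrix lies on the unit sphere
  anyway. The only analytic input is that the arc length \<sigma> of the indicatrix, being
  strictly increasing, maps the open interval I onto an open interval J.\<close>

lemma has_real_derivative_inner_const:
  fixes f :: "real \<Rightarrow> 'a::real_inner"
  assumes "(f has_vector_derivative f') F"
  shows "((\<lambda>t. f t \<bullet> u) has_real_derivative f' \<bullet> u) F"
  using bounded_linear.has_vector_derivative[OF bounded_linear_inner_left assms]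
  by (simp add: has_real_derivative_iff_has_vector_derivative)

lemma DERIV_pos_image_open_interval:
  fixes \<sigma> \<sigma>' :: "real \<Rightarrow> real"
  assumes I: "is_interval I" "open I"
    and deriv: "\<And>s. s \<in> I \<Longrightarrow> (\<sigma> has_real_derivative \<sigma>' s) (at s)"
    and pos: "\<And>s. s \<in> I \<Longrightarrow> \<sigma>' s > 0"
  shows "is_interval (\<sigma> ` I)" "open (\<sigma> ` I)"
proof -
  have cont: "continuous_on I \<sigma>"
    using deriv by (meson DERIV_isCont continuous_at_imp_continuous_on)
  then have "connected (\<sigma> ` I)"
    using connected_continuous_image is_interval_connected[OF I(1)] by blast
  then show "is_interval (\<sigma> ` I)"
    by (simp add: is_interval_connected_1)
  have "strict_mono_on I \<sigma>"
  proof (rule strict_mono_onI)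
    fix a b assume "a \<in> I" "b \<in> I" "a < b"
    then show "\<sigma> a < \<sigma> b"
      using DERIV_pos_imp_increasing deriv pos mem_is_interval_1_I[OF I(1)] by metis
  qed
  then show "open (\<sigma> ` I)"
    using invariance_of_domain[OF cont I(2)] strict_mono_on_imp_inj_on by blast
qed

lemma spherical_if_norm_eq_1:
  assumes "\<And>s. s \<in> J \<Longrightarrow> norm (c s) = 1"
  shows "spherical J c"
  unfolding spherical_def using assms by (intro exI[of _ 0] exI[of _ 1]) simp

lemma unit_tangent_frenet:
  assumes "frenet_curve J c T N B k t" "s \<in> J"
  shows "unit_tangent c s = T s"
  using assms unfolding frenet_curve_def unit_tangent_def
  by (auto simp: vector_derivative_at)

lemma principal_normal_frenet:
  assumes F: "frenet_curve J c T N B k t" and "open J" "s \<in> J"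
  shows "principal_normal c s = N s"
proof -
  have dT: "(T has_vector_derivative k s *\<^sub>R N s) (at s)" and "k s > 0" "norm (N s) = 1"
    using F assms unfolding frenet_curve_def by auto
  have "(unit_tangent c has_vector_derivative k s *\<^sub>R N s) (at s)"
    using has_vector_derivative_transform_within_open[OF dT \<open>open J\<close> \<open>s \<in> J\<close>]
      unit_tangent_frenet[OF F] by metis
  then have "vector_derivative (unit_tangent c) (at s) = k s *\<^sub>R N s"
    by (simp add: vector_derivative_at)
  then show ?thesis
    using \<open>k s > 0\<close> \<open>norm (N s) = 1\<close> by (simp add: principal_normal_def)
qed

lemma helix_iff_tangent_inner_const:
  assumes F: "frenet_curve J c T N B k t"
  shows "helix J c \<longleftrightarrow> (\<exists>u. u \<noteq> 0 \<and> (\<exists>C. \<forall>s\<in>J. T s \<bullet> u = C))"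
proof -
  have angle: "vec_angle (unit_tangent c s) u = arccos ((T s \<bullet> u) / norm u)"
    and bounded: "u \<noteq> 0 \<Longrightarrow> \<bar>(T s \<bullet> u) / norm u\<bar> \<le> 1" if "s \<in> J" for s u
  proof -
    have "norm (T s) = 1"
      using F that unfolding frenet_curve_def by blast
    then show "vec_angle (unit_tangent c s) u = arccos ((T s \<bullet> u) / norm u)"
      using unit_tangent_frenet[OF F that] by (simp add: vec_angle_def)
    show "\<bar>(T s \<bullet> u) / norm u\<bar> \<le> 1" if "u \<noteq> 0"
      using Cauchy_Schwarz_ineq2[of "T s" u] \<open>norm (T s) = 1\<close> that by (simp add: abs_divide)
  qed
  have "(\<exists>\<theta>. \<forall>s\<in>J. arccos ((T s \<bullet> u) / norm u) = \<theta>) \<longleftrightarrow> (\<exists>C. \<forall>s\<in>J. T s \<bullet> u = C)"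
    if "u \<noteq> 0" for u
  proof
    assume "\<exists>\<theta>. \<forall>s\<in>J. arccos ((T s \<bullet> u) / norm u) = \<theta>"
    then obtain \<theta> where "\<forall>s\<in>J. arccos ((T s \<bullet> u) / norm u) = \<theta>" by blast
    then have "\<forall>s\<in>J. (T s \<bullet> u) / norm u = cos \<theta>"
      using bounded[OF _ that] cos_arccos_abs by metis
    then show "\<exists>C. \<forall>s\<in>J. T s \<bullet> u = C"
      using that by (metis divide_eq_eq norm_eq_zero)
  qed auto
  then show ?thesis
    unfolding helix_def using angle by (metis (no_types, lifting))
qed

lemma frenet_tangent_inner_const_iff:
  assumes F: "frenet_curve J c T N B k t" and J: "open J" "is_interval J"
  shows "(\<exists>C. \<forall>s\<in>J. T s \<bullet> u = C) \<longleftrightarrow> (\<forall>s\<in>J. N s \<bullet> u = 0)"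
proof -
  have deriv: "((\<lambda>s. T s \<bullet> u) has_real_derivative k s * (N s \<bullet> u)) (at s)"
    and "k s > 0" if "s \<in> J" for s
    using F that has_real_derivative_inner_const unfolding frenet_curve_def by fastforce+
  show ?thesis
  proof
    assume "\<exists>C. \<forall>s\<in>J. T s \<bullet> u = C"
    then obtain C where C: "\<forall>s\<in>J. T s \<bullet> u = C" by blast
    have "k s * (N s \<bullet> u) = 0" if "s \<in> J" for s
    proof (rule DERIV_unique[OF deriv[OF that]])
      show "((\<lambda>s. T s \<bullet> u) has_real_derivative 0) (at s)"
        using has_field_derivative_transform_within_open[OF DERIV_const J(1) that] C by simp
    qed
    then show "\<forall>s\<in>J. N s \<bullet> u = 0"
      using \<open>\<And>s. s \<in> J \<Longrightarrow> k s > 0\<close> by force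
  next
    assume "\<forall>s\<in>J. N s \<bullet> u = 0"
    then show "\<exists>C. \<forall>s\<in>J. T s \<bullet> u = C"
      using has_field_derivative_zero_constant[of J "\<lambda>s. T s \<bullet> u"] deriv
        is_interval_convex[OF J(2)] by (simp add: has_field_derivative_at_within)
  qed
qed

lemma helix_iff_normal_orthogonal:
  assumes "frenet_curve J c T N B k t" "open J" "is_interval J"
  shows "helix J c \<longleftrightarrow> (\<exists>u. u \<noteq> 0 \<and> (\<forall>s\<in>J. N s \<bullet> u = 0))"
  using helix_iff_tangent_inner_const[OF assms(1)] frenet_tangent_inner_const_iff[OF assms]
  by simp

theorem theorem5p5:
  fixes I J :: "real set"
    and \<alpha> T N B :: "real \<Rightarrow> real^3" and \<kappa> \<tau> :: "real \<Rightarrow> real"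
    and \<sigma> :: "real \<Rightarrow> real"
    and \<alpha>T TT NT BT :: "real \<Rightarrow> real^3" and \<kappa>T \<tau>T :: "real \<Rightarrow> real"
    and x y z :: "real \<Rightarrow> real"
    and \<beta> N\<beta> B\<beta> :: "real \<Rightarrow> real^3" and \<kappa>\<beta> \<tau>\<beta> :: "real \<Rightarrow> real"
  assumes I: "is_interval I" "open I" "I \<noteq> {}"
    and alpha: "frenet_curve I \<alpha> T N B \<kappa> \<tau>"
    and sigma_deriv: "\<And>s. s \<in> I \<Longrightarrow> (\<sigma> has_real_derivative \<kappa> s) (at s)"
    and J: "J = \<sigma> ` I"
    and alphaT: "\<And>s. s \<in> I \<Longrightarrow> \<alpha>T (\<sigma> s) = T s"
    and alphaT_frenet: "frenet_curve J \<alpha>T TT NT BT \<kappa>T \<tau>T"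
    and xyz: "\<And>u. u \<in> J \<Longrightarrow> (x u)\<^sup>2 + (y u)\<^sup>2 + (z u)\<^sup>2 = 1"
    and beta: "frenet_curve J \<beta> (\<lambda>u. x u *\<^sub>R TT u + y u *\<^sub>R NT u + z u *\<^sub>R BT u) N\<beta> B\<beta> \<kappa>\<beta> \<tau>\<beta>"
    and bertrand: "\<And>u. u \<in> J \<Longrightarrow> N\<beta> u = NT u"
  shows "(spherical J \<alpha>T \<and> helix J \<alpha>T \<longleftrightarrow> helix J \<beta>)
       \<and> (spherical J \<alpha>T \<and> slant_helix J \<alpha>T \<longleftrightarrow> slant_helix J \<beta>)"
proof -
  have "\<And>s. s \<in> I \<Longrightarrow> \<kappa> s > 0" "\<And>s. s \<in> I \<Longrightarrow> norm (T s) = 1"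
    using alpha unfolding frenet_curve_def by blast+
  then have J_interval: "is_interval J" and J_open: "open J" and "spherical J \<alpha>T"
    using DERIV_pos_image_open_interval[OF I(1,2) sigma_deriv] J alphaT
    by (auto intro: spherical_if_norm_eq_1)
  moreover have "helix J \<alpha>T \<longleftrightarrow> helix J \<beta>"
    using helix_iff_normal_orthogonal[OF alphaT_frenet J_open J_interval]
      helix_iff_normal_orthogonal[OF beta J_open J_interval] bertrand by simp
  moreover have "slant_helix J \<alpha>T \<longleftrightarrow> slant_helix J \<beta>"
    using principal_normal_frenet[OF alphaT_frenet J_open]
      principal_normal_frenet[OF beta J_open] bertrand by (simp add: slant_helix_def)
  ultimately show ?thesis by blast
qed

end
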